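(* For $\zeta\in\mathbb D$ define $$z(\zeta)=h_E(\zeta)+ih_N(\zeta)-h_W(\zeta)-ih_S(\zeta),\qquad \vartheta(\zeta)=\tfrac{\sqrt2}{2}\big(h_E(\zeta)-h_N(\zeta)+h_W(\zeta)-h_S(\zeta)\big).$$ Then: (i) $z$ and $\vartheta$ are harmonic on $\mathbb D$; (ii) for all $\zeta\in\mathbb D$, $$\partial_\zeta z(\zeta)\cdot\partial_\zeta\overline{z}(\zeta)=\big(\partial_\zeta\vartheta(\zeta)\big)^2,$$ i.e. $\zeta$ is a conformal parametrization of the surface $\mathrm S_\diamondsuit=\{(z(\zeta),\vartheta(\zeta)):\zeta\in\mathbb D\}\subset\mathbb C\times\mathbb R$ with respect to the Lorentz quadratic form $|dz|^2-d\vartheta^2$ of $\mathbb R^{2+1}$; (iii) $(z(\zeta),\vartheta(\zeta))\to(1,\tfrac{\sqrt2}2)$, $(i,-\tfrac{\sqrt2}2)$, $(-1,\tfrac{\sqrt2}2)$, $(-i,-\tfrac{\sqrt2}2)$ as $\zeta$ tends to a point of the open arc $\gamma_E,\gamma_N,\gamma_W,\gamma_S$ respectively, and the set of all limit points of $(z(\zeta),\vartheta(\zeta))$ as $\zeta\to\partial\mathbb D$ is the closed (non-planar) quadrilateral $\mathrm C_\diamondsuit$ with consecutive vertices $(1,\tfrac{\sqrt2}2),(i,-\tfrac{\sqrt2}2),(-1,\tfrac{\sqrt2}2),(-i,-\tfrac{\sqrt2}2)$. Consequently, $\mathrm S_\diamondsuit$ is a minimal surface in the Minkowski space $\mathbb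 R^{2+1}$ spanning $\mathrm C_\diamondsuit$, with conformal parametrization $\zeta$.
   Context: $\mathbb D$ is the open unit disc. $\gamma_E=(e^{-i\pi/4},e^{i\pi/4})$, $\gamma_N=(e^{i\pi/4},e^{3i\pi/4})$, $\gamma_W=(e^{3i\pi/4},e^{5i\pi/4})$, $\gamma_S=(e^{5i\pi/4},e^{7i\pi/4})$ are the four counterclockwise boundary arcs, and $h_E,h_N,h_W,h_S$ denote their harmonic measures in $\mathbb D$: for $\alpha<\beta<\alpha+2\pi$, $\mathrm{hm}_{\mathbb D}(\zeta;(e^{i\alpha},e^{i\beta}))=\tfrac1\pi\big(\arg(e^{i\beta}-\zeta)-\arg(e^{i\alpha}-\zeta)\big)-\tfrac1{2\pi}(\beta-\alpha)$. $\partial_\zeta=\tfrac12(\partial_{\mathrm{Re}\zeta}-i\partial_{\mathrm{Im}\zeta})$ is the Wirtinger derivative. $\mathbb R^{2+1}\cong\mathbb C\times\mathbb R$ carries the Lorentz metric $dx^2+dy^2-d\vartheta^2$ for $(x+iy,\vartheta)$. (In the paper these $z,\vartheta$ are the limits of the symmetric t-embeddings and of the real part of the rotated origami maps of homogeneous Aztec diamonds, with $\zeta=\rho e^{i\phi}$, $r=\sqrt2\rho/(1+\rho^2)$.) *)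

theory Defs
  imports "HOL-Analysis.Analysis"
begin

text \<open>Harmonic measure of the counterclockwise arc (e^{i a}, e^{i b}) in the unit disc, via the
  formula of the paper. The difference arg(e^{ib}-z) - arg(e^{ia}-z) is the counterclockwise
  angle from e^{ia}-z to e^{ib}-z, taken in [0,2pi) (it lies in (0,2pi) for z in the disc).\<close>
definition hm :: "real \<Rightarrow> real \<Rightarrow> complex \<Rightarrow> real" where
  "hm a b \<zeta> = (1/pi) * Arg2pi ((exp (\<i> * of_real b) - \<zeta>) / (exp (\<i> * of_real a) - \<zeta>))
               - (b - a) / (2*pi)"

definition hE :: "complex \<Rightarrow> real" where "hE = hm (-pi/4) (pi/4)"
definition hN :: "complex \<Rightarrow> real" where "hN = hm (pi/4) (3*pi/4)"
definition hW :: "complex \<Rightarrow> real" where "hW = hm (3*pi/4) (5*pi/4)"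
definition hS :: "complex \<Rightarrow> real" where "hS = hm (5*pi/4) (7*pi/4)"

definition arc :: "real \<Rightarrow> real \<Rightarrow> complex set" where
  "arc a b = {exp (\<i> * of_real t) | t. a < t \<and> t < b}"

definition zD :: "complex \<Rightarrow> complex" where
  "zD \<zeta> = of_real (hE \<zeta>) + \<i> * of_real (hN \<zeta>) - of_real (hW \<zeta>) - \<i> * of_real (hS \<zeta>)"

definition thetaD :: "complex \<Rightarrow> real" where
  "thetaD \<zeta> = sqrt 2 / 2 * (hE \<zeta> - hN \<zeta> + hW \<zeta> - hS \<zeta>)"

definition dRe :: "(complex \<Rightarrow> 'a::real_normed_vector) \<Rightarrow> complex \<Rightarrow> 'a" where
  "dRe f z = vector_derivative (\<lambda>t::real. f (z + of_real t)) (at 0)"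
definition dIm :: "(complex \<Rightarrow> 'a::real_normed_vector) \<Rightarrow> complex \<Rightarrow> 'a" where
  "dIm f z = vector_derivative (\<lambda>t::real. f (z + \<i> * of_real t)) (at 0)"

definition wirt :: "(complex \<Rightarrow> complex) \<Rightarrow> complex \<Rightarrow> complex" where
  "wirt f z = (dRe f z - \<i> * dIm f z) / 2"

definition harmonic_on :: "(complex \<Rightarrow> 'a::real_normed_vector) \<Rightarrow> complex set \<Rightarrow> bool" where
  "harmonic_on f S \<longleftrightarrow> open S \<and>
     (\<forall>z\<in>S. f differentiable (at z) \<and> dRe f differentiable (at z) \<and> dIm f differentiable (at z)) \<and>
     continuous_on S (dRe (dRe f)) \<and> continuous_on S (dIm (dIm f)) \<and>
     continuous_on S (dRe (dIm f)) \<and> continuous_on S (dIm (dRe f)) \<and>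
     (\<forall>z\<in>S. dRe (dRe f) z + dIm (dIm f) z = 0)"

definition boundary_cluster_set :: "(complex \<Rightarrow> 'a::topological_space) \<Rightarrow> 'a set" where
  "boundary_cluster_set F = {p. \<exists>s::nat \<Rightarrow> complex. (\<forall>n. s n \<in> ball 0 1) \<and>
       (\<lambda>n. norm (s n)) \<longlonglongrightarrow> 1 \<and> (\<lambda>n. F (s n)) \<longlonglongrightarrow> p}"

definition vE :: "complex \<times> real" where "vE = (1, sqrt 2 / 2)"
definition vN :: "complex \<times> real" where "vN = (\<i>, - sqrt 2 / 2)"
definition vW :: "complex \<times> real" where "vW = (-1, sqrt 2 / 2)"
definition vS :: "complex \<times> real" where "vS = (-\<i>, - sqrt 2 / 2)"

definition C_diamond :: "(complex \<times> real) set" where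
  "C_diamond = closed_segment vE vN \<union> closed_segment vN vW \<union> closed_segment vW vS \<union> closed_segment vS vE"

end

theory Submission
  imports Defs "HOL-Complex_Analysis.Complex_Analysis"
begin

text \<open>
  The four harmonic measures are rotations of the harmonic measure \<open>hq\<close> of the quarter arc
  from \<open>1\<close> to \<open>\<i>\<close>, and \<open>hq = 2 Re qlog + 3/4\<close> for the holomorphic branch
  \<open>qlog = log ((w - \<i>)/(1 - w)) / (2\<pi>\<i>)\<close>.  Hence \<open>zD = zD_hol + cnj zD_antihol\<close> and
  \<open>thetaD = 2 Re thetaD_hol\<close> with holomorphic parts; this gives harmonicity, and the Wirtinger
  derivatives of \<open>zD\<close>, \<open>cnj zD\<close>, \<open>thetaD\<close> are the complex derivatives of the three parts.
  These are combinations of the four simple fractions \<open>1/(\<zeta> - \<i>\<^sup>k e\<^sup>i\<^sup>\<pi>\<^sup>/\<^sup>4)\<close>, so the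
  conformality relation becomes a partial-fraction identity.

  Since the four measures are nonnegative and sum to \<open>1\<close>, \<open>(zD, thetaD) = \<Sum> h\<^sub>X v\<^sub>X\<close> is a
  convex combination of the vertices.  Near a point of an open arc the three other weights tend
  to \<open>0\<close>, and near any point of the circle at least two do, which gives the arc limits and puts
  all boundary limit points on the quadrilateral.  Conversely, approaching \<open>e\<^sup>i\<^sup>\<pi>\<^sup>/\<^sup>4\<close> along a
  level curve of \<open>hE\<close> produces every point of the edge from \<open>vE\<close> to \<open>vN\<close>, and the symmetry
  \<open>\<zeta> \<mapsto> -\<i>\<zeta>\<close>, which acts on the surface as \<open>(z, \<vartheta>) \<mapsto> (-\<i>z, -\<vartheta>)\<close>, carries this
  edge to the other three.
\<close>

section \<open>Harmonic functions from holomorphic ones\<close>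

lemma partials_of_has_derivative:
  assumes "(f has_derivative D) (at z)"
  shows "dRe f z = D 1" "dIm f z = D \<i>"
proof -
  have "((\<lambda>t::real. z + of_real t * v) has_vector_derivative v) (at 0)" for v
    by (auto intro!: derivative_eq_intros)
  moreover have "(f has_derivative D) (at ((\<lambda>t::real. z + of_real t * v) 0) within range (\<lambda>t::real. z + of_real t * v))" for v
    using assms by (simp add: has_derivative_at_withinI)
  ultimately have "((f \<circ> (\<lambda>t::real. z + of_real t * v)) has_vector_derivative D v) (at 0)" for v
    by (rule vector_derivative_diff_chain_within)
  from this[of 1] this[of \<i>] show "dRe f z = D 1" "dIm f z = D \<i>"
    unfolding dRe_def dIm_def by (auto simp: o_def mult.commute intro: vector_derivative_at)
qed

lemma has_derivative_linear_holomorphic: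
  assumes S: "open S" "z \<in> S" and g: "g holomorphic_on S" and h: "h holomorphic_on S"
    and L: "bounded_linear L" and f: "\<And>w. w \<in> S \<Longrightarrow> f w = L (g w, h w)"
  shows "(f has_derivative (\<lambda>v. L (deriv g z * v, deriv h z * v))) (at z)"
proof -
  have "(g has_derivative (\<lambda>v. deriv g z * v)) (at z)" "(h has_derivative (\<lambda>v. deriv h z * v)) (at z)"
    using holomorphic_derivI[OF g S(1,2)] holomorphic_derivI[OF h S(1,2)]
    by (simp_all add: has_field_derivative_def)
  then have "((\<lambda>w. L (g w, h w)) has_derivative (\<lambda>v. L (deriv g z * v, deriv h z * v))) (at z)"
    by (intro bounded_linear.has_derivative[OF L] has_derivative_Pair)
  then show ?thesis by (rule has_derivative_transform_within_open[OF _ S]) (simp add: f)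
qed

lemma partials_linear_holomorphic:
  assumes "open S" "z \<in> S" "g holomorphic_on S" "h holomorphic_on S"
    and L: "bounded_linear L" and "\<And>w. w \<in> S \<Longrightarrow> f w = L (g w, h w)"
  shows "f differentiable (at z)" "dRe f z = L (deriv g z, deriv h z)"
    "dIm f z = L (\<i> * deriv g z, \<i> * deriv h z)"
  using has_derivative_linear_holomorphic[OF assms] partials_of_has_derivative[of f _ z]
  by (auto simp: differentiable_def mult.commute)

text \<open>For holomorphic functions the partial derivative along \<open>Im\<close> is \<open>\<i>\<close> times the one along
  \<open>Re\<close>; inside the real-linear \<open>L\<close> the two second partials therefore differ by the factor
  \<open>\<i>\<^sup>2 = -1\<close>.\<close>

lemma harmonic_on_linear_holomorphic:
  assumes S: "open S" and g: "g holomorphic_on S" and h: "h holomorphic_on S"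
    and L: "bounded_linear L" and f: "\<And>w. w \<in> S \<Longrightarrow> f w = L (g w, h w)"
  shows "harmonic_on f S"
proof -
  define g1 h1 where "g1 = deriv g" "h1 = deriv h"
  have g1: "g1 holomorphic_on S" "(\<lambda>w. \<i> * g1 w) holomorphic_on S"
    and h1: "h1 holomorphic_on S" "(\<lambda>w. \<i> * h1 w) holomorphic_on S"
    unfolding g1_h1_def using g h S by (auto intro!: holomorphic_intros holomorphic_deriv)
  have i_deriv: "deriv (\<lambda>w. \<i> * k w) z = \<i> * deriv k z" if "k holomorphic_on S" "z \<in> S" for k z
    using that S by (intro deriv_cmult holomorphic_on_imp_differentiable_at)
  have L_neg: "L (- a, - b) = - L (a, b)" for a b
    using linear_simps(4)[OF L, of "(a, b)"] by simp
  note P = partials_linear_holomorphic[OF S _ _ _ L]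
  have Re1: "dRe f w = L (g1 w, h1 w)" and Im1: "dIm f w = L (\<i> * g1 w, \<i> * h1 w)" if "w \<in> S" for w
    using P[OF that g h f] by (simp_all add: g1_h1_def)
  have ReRe: "dRe (dRe f) z = L (deriv g1 z, deriv h1 z)"
    and ImRe: "dIm (dRe f) z = L (\<i> * deriv g1 z, \<i> * deriv h1 z)"
    and ReIm: "dRe (dIm f) z = L (\<i> * deriv g1 z, \<i> * deriv h1 z)"
    and ImIm: "dIm (dIm f) z = - L (deriv g1 z, deriv h1 z)" if "z \<in> S" for z
    using P[OF that g1(1) h1(1) Re1] P[OF that g1(2) h1(2) Im1] i_deriv[OF g1(1) that] i_deriv[OF h1(1) that]
    by (simp_all add: L_neg)
  have cont: "continuous_on S (\<lambda>z. L (c * deriv g1 z, c * deriv h1 z))" for c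
    using g1(1) h1(1) S
    by (intro bounded_linear.continuous_on[OF L] continuous_intros holomorphic_on_imp_continuous_on
        holomorphic_deriv)
  have cont_neg: "continuous_on S (\<lambda>z. - L (deriv g1 z, deriv h1 z))"
    using cont[of 1] by (intro continuous_intros) simp
  show ?thesis
    unfolding harmonic_on_def
  proof (intro conjI ballI)
    fix z assume z: "z \<in> S"
    show "f differentiable at z" "dRe f differentiable at z" "dIm f differentiable at z"
      using P[OF z g h f] P[OF z g1(1) h1(1) Re1] P[OF z g1(2) h1(2) Im1] by simp_all
    show "dRe (dRe f) z + dIm (dIm f) z = 0" using ReRe[OF z] ImIm[OF z] by simp
  next
    show "continuous_on S (dRe (dRe f))" "continuous_on S (dIm (dIm f))"
      "continuous_on S (dRe (dIm f))" "continuous_on S (dIm (dRe f))"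
      using cont[of 1] cont_neg cont[of \<i>]
      by (auto simp: ReRe ImIm ReIm ImRe cong: continuous_on_cong)
  qed (fact S)
qed

lemma wirt_holomorphic_plus_cnj:
  assumes "open S" "z \<in> S" "g holomorphic_on S" "h holomorphic_on S"
    and "\<And>w. w \<in> S \<Longrightarrow> f w = g w + cnj (h w)"
  shows "wirt f z = deriv g z"
proof -
  have L: "bounded_linear (\<lambda>p. fst p + cnj (snd p))"
    by (intro bounded_linear_add bounded_linear_fst bounded_linear_compose[OF bounded_linear_cnj] bounded_linear_snd)
  have "f w = (\<lambda>p. fst p + cnj (snd p)) (g w, h w)" if "w \<in> S" for w
    using assms(5)[OF that] by simp
  note partials = partials_linear_holomorphic[OF assms(1-4) L this]
  show ?thesis
    by (simp add: wirt_def partials(2,3) algebra_simps)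
qed

text \<open>The Wirtinger identity for the surface reduces to this identity for the simple fractions
  with poles at the four points \<open>\<plusminus>a, \<plusminus>\<i>a\<close> where \<open>a = e\<^sup>i\<^sup>\<pi>\<^sup>/\<^sup>4\<close>.\<close>

lemma pole_square_identity:
  fixes a z :: complex
  assumes a: "a^2 = \<i>" and z: "z^2 \<noteq> \<i>" "z^2 \<noteq> -\<i>"
  shows "(1/(z-a) - 1/(z+a))^2 + (1/(z-\<i>*a) - 1/(z+\<i>*a))^2
       = (1/(z-a) + 1/(z+a) - 1/(z-\<i>*a) - 1/(z+\<i>*a))^2"
proof -
  define A B C D where "A = 1/(z-a)" "B = 1/(z+a)" "C = 1/(z-\<i>*a)" "D = 1/(z+\<i>*a)"
  have "(z - a) * (z + a) = z^2 - \<i>" "(z - \<i>*a) * (z + \<i>*a) = z^2 + \<i>"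
    using a by (simp_all add: algebra_simps power2_eq_square)
  with z have "z - a \<noteq> 0" "z + a \<noteq> 0" "z - \<i>*a \<noteq> 0" "z + \<i>*a \<noteq> 0"
    by (auto simp: add_eq_0_iff2)
  then have inv: "A*(z-a) = 1" "B*(z+a) = 1" "C*(z-\<i>*a) = 1" "D*(z+\<i>*a) = 1"
    by (simp_all add: A_B_C_D_def)
  have "A - B = 2*a*(A*B)" using inv by algebra
  moreover have "C - D = 2*\<i>*a*(C*D)" using inv by algebra
  moreover have "A + B - C - D = 2*z*(A*B - C*D)" using inv by algebra
  moreover have "4*\<i>*((A*B)^2 - (C*D)^2) = 4*z^2*(A*B - C*D)^2"
  proof -
    have "A*B*(z^2 - \<i>) = 1" "C*D*(z^2 + \<i>) = 1" using inv a power2_i by algebra+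
    then show ?thesis using power2_i by algebra
  qed
  ultimately show ?thesis unfolding A_B_C_D_def[symmetric]
    using a power2_i by algebra
qed

section \<open>Limits of convex combinations of four points\<close>

lemma tendsto_convex_weights:
  fixes va vb vc vd :: "'a::real_normed_vector"
  assumes sum: "\<forall>\<^sub>F x in F. a x + b x + c x + d x = 1"
    and a: "(a \<longlongrightarrow> l) F" and c: "(c \<longlongrightarrow> 0) F" and d: "(d \<longlongrightarrow> 0) F"
  shows "((\<lambda>x. a x *\<^sub>R va + b x *\<^sub>R vb + c x *\<^sub>R vc + d x *\<^sub>R vd) \<longlongrightarrow> l *\<^sub>R va + (1 - l) *\<^sub>R vb) F"
proof -
  have "((\<lambda>x. a x *\<^sub>R va + (1 - a x - c x - d x) *\<^sub>R vb + c x *\<^sub>R vc + d x *\<^sub>R vd)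
      \<longlongrightarrow> l *\<^sub>R va + (1 - l - 0 - 0) *\<^sub>R vb + 0 *\<^sub>R vc + 0 *\<^sub>R vd) F"
    by (intro tendsto_intros a c d)
  moreover have "\<forall>\<^sub>F x in F. a x *\<^sub>R va + (1 - a x - c x - d x) *\<^sub>R vb + c x *\<^sub>R vc + d x *\<^sub>R vd
      = a x *\<^sub>R va + b x *\<^sub>R vb + c x *\<^sub>R vc + d x *\<^sub>R vd"
    using sum by eventually_elim (simp add: eq_diff_eq')
  ultimately show ?thesis by (simp add: tendsto_cong)
qed

lemma limit_in_closed_segment:
  fixes va vb vc vd :: "'a::real_normed_vector"
  assumes F: "F \<noteq> bot"
    and weights: "\<forall>\<^sub>F x in F. 0 \<le> a x \<and> 0 \<le> b x \<and> 0 \<le> c x \<and> 0 \<le> d x \<and> a x + b x + c x + d x = 1"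
    and c: "(c \<longlongrightarrow> 0) F" and d: "(d \<longlongrightarrow> 0) F"
    and p: "((\<lambda>x. a x *\<^sub>R va + b x *\<^sub>R vb + c x *\<^sub>R vc + d x *\<^sub>R vd) \<longlongrightarrow> p) F"
  shows "p \<in> closed_segment va vb"
proof (rule Lim_in_closed_set[OF closed_segment _ F])
  have "((\<lambda>x. (a x *\<^sub>R va + b x *\<^sub>R vb + c x *\<^sub>R vc + d x *\<^sub>R vd)
      - (c x *\<^sub>R (vc - va) + d x *\<^sub>R (vd - va))) \<longlongrightarrow> p - (0 *\<^sub>R (vc - va) + 0 *\<^sub>R (vd - va))) F"
    by (intro tendsto_intros p c d)
  moreover have "\<forall>\<^sub>F x in F. (a x *\<^sub>R va + b x *\<^sub>R vb + c x *\<^sub>R vc + d x *\<^sub>R vd)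
      - (c x *\<^sub>R (vc - va) + d x *\<^sub>R (vd - va)) = (1 - b x) *\<^sub>R va + b x *\<^sub>R vb"
    using weights by eventually_elim (simp add: algebra_simps eq_diff_eq' flip: scaleR_add_left)
  ultimately show "((\<lambda>x. (1 - b x) *\<^sub>R va + b x *\<^sub>R vb) \<longlongrightarrow> p) F"
    by (simp add: tendsto_cong)
  show "\<forall>\<^sub>F x in F. (1 - b x) *\<^sub>R va + b x *\<^sub>R vb \<in> closed_segment va vb"
    using weights by eventually_elim (auto simp: in_segment intro!: exI[of _ "b _"])
qed

section \<open>The harmonic measure of a quarter arc\<close>

definition rot8 :: complex where "rot8 = exp (\<i> * of_real (pi / 4))"

lemma rot8_eq: "rot8 = Complex (sqrt 2 / 2) (sqrt 2 / 2)"
  by (simp add: rot8_def complex_eq_iff Re_exp Im_exp cos_45 sin_45)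

lemma rot8_squared: "rot8^2 = \<i>"
  by (simp add: rot8_eq complex_eq_iff power2_eq_square)

lemma norm_rot8: "norm rot8 = 1"
  by (simp add: rot8_def)

lemma cnj_rot8: "cnj rot8 = - \<i> * rot8"
  by (simp add: rot8_eq complex_eq_iff)

lemma hm_rotate: "hm a b z = hm 0 (b - a) (exp (- (\<i> * of_real a)) * z)"
proof -
  define u where "u = exp (\<i> * of_real a)"
  define e where "e = exp (\<i> * of_real (b - a))"
  have u0: "u \<noteq> 0" by (simp add: u_def)
  have b: "exp (\<i> * of_real b) = u * e"
    by (simp add: u_def e_def flip: exp_add) (simp add: algebra_simps)
  have "e - z / u = (u * e - z) / u" "1 - z / u = (u - z) / u" using u0 by (simp_all add: field_simps)
  then have "(exp (\<i> * of_real b) - z) / (u - z) = (e - z / u) / (1 - z / u)"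
    unfolding b using u0 by simp
  then show ?thesis unfolding hm_def u_def e_def by (simp add: exp_minus field_simps)
qed

definition hq :: "complex \<Rightarrow> real" where "hq = hm 0 (pi / 2)"

lemma hq_eq: "hq w = Arg2pi ((\<i> - w) / (1 - w)) / pi - 1/4"
  by (simp add: hq_def hm_def exp_eq_polar)

lemma exp_minus_add_quarter:
  "exp (- (\<i> * of_real (a + pi/2))) = - \<i> * exp (- (\<i> * of_real a))"
proof -
  have "exp (- (\<i> * of_real (a + pi/2))) = exp (- (\<i> * of_real a)) * exp (- (\<i> * of_real (pi/2)))"
    by (subst exp_add[symmetric]) (simp add: algebra_simps)
  also have "exp (- (\<i> * of_real (pi/2))) = - \<i>"
    by (simp add: exp_minus exp_eq_polar)
  finally show ?thesis by simp
qed

lemma h_eq_hq: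
  "hE z = hq (rot8 * z)" "hN z = hq (- \<i> * rot8 * z)"
  "hW z = hq (- rot8 * z)" "hS z = hq (\<i> * rot8 * z)"
proof -
  have N: "exp (- (\<i> * of_real (pi/4))) = - \<i> * rot8"
    using exp_minus_add_quarter[of "-pi/4"] by (simp add: rot8_def)
  have W: "exp (- (\<i> * of_real (3*pi/4))) = - rot8"
    using exp_minus_add_quarter[of "pi/4"] N by simp
  have S: "exp (- (\<i> * of_real (5*pi/4))) = \<i> * rot8"
    using exp_minus_add_quarter[of "3*pi/4"] W by simp
  show "hE z = hq (rot8 * z)" unfolding hE_def hq_def
    by (subst hm_rotate) (simp add: rot8_def)
  show "hN z = hq (- \<i> * rot8 * z)"
    unfolding hN_def hq_def hm_rotate[of "pi/4"] N by simp
  show "hW z = hq (- rot8 * z)"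
    unfolding hW_def hq_def hm_rotate[of "3*pi/4"] W by simp
  show "hS z = hq (\<i> * rot8 * z)"
    unfolding hS_def hq_def hm_rotate[of "5*pi/4"] S by simp
qed

lemma h_quarter_turn: "hN z = hE (- \<i> * z)" "hW z = hE (- z)" "hS z = hE (\<i> * z)"
  by (simp_all add: h_eq_hq algebra_simps)

lemma halfplane_of_disc:
  assumes "norm w < 1"
  shows "Re ((\<i> - w) / (1 - w)) < Im ((\<i> - w) / (1 - w))"
proof -
  obtain x y where w: "w = Complex x y" by (cases w)
  have "(norm w)^2 < 1" using assms by (simp add: power_less_one_iff)
  then have xy: "x^2 + y^2 < 1" by (simp add: w cmod_power2)
  then have "x \<noteq> 1" by (auto simp: power2_eq_square)
  then have d: "(1 - x)^2 + y^2 > 0" by (simp add: sum_power2_gt_zero_iff)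
  have "Im ((\<i> - w) / (1 - w)) - Re ((\<i> - w) / (1 - w)) = (1 - x^2 - y^2) / ((1 - x)^2 + y^2)"
    by (simp add: w Im_divide Re_divide complex_norm_square power2_eq_square field_simps)
       (simp add: add_divide_distrib[symmetric] algebra_simps)
  also have "\<dots> > 0" using xy d by (intro divide_pos_pos) auto
  finally show ?thesis by simp
qed

lemma Arg2pi_halfplane_gt:
  assumes "Re q < Im q" shows "pi/4 < Arg2pi q"
proof -
  define p where "p = q * (1 - \<i>)"
  have "Im p > 0" using assms by (simp add: p_def)
  then have p: "p \<noteq> 0" "0 < Arg2pi p" "Arg2pi p < pi" using Arg2pi_lt_pi by auto
  have "q = p * (rot8 / sqrt 2)"
    by (simp add: p_def rot8_eq complex_eq_iff Re_divide Im_divide field_simps)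
  also have "\<dots> = of_real (norm p / sqrt 2) * exp (\<i> * of_real (Arg2pi p + pi/4))"
    by (subst (1) Arg2pi_eq[of p], simp only: of_real_add distrib_left exp_add rot8_def)
       (simp add: field_simps)
  finally have "Arg2pi q = Arg2pi p + pi/4"
    by (intro Arg2pi_unique[of "norm p / sqrt 2"]) (use p in auto)
  with p show ?thesis by simp
qed

lemma hq_pos: "norm w < 1 \<Longrightarrow> 0 < hq w"
  using Arg2pi_halfplane_gt[OF halfplane_of_disc] by (simp add: hq_eq field_simps)

text \<open>The Moebius map \<open>q \<mapsto> (q - \<i>)/(q - 1)\<close> inverts \<open>w \<mapsto> (\<i> - w)/(1 - w)\<close> and maps the
  half-plane \<open>Re q < Im q\<close> into the disc; in the coordinate \<open>q\<close> the measure \<open>hq\<close> is an angle.\<close>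

lemma hq_mobius:
  assumes "Re q < Im q"
  shows "norm ((q - \<i>) / (q - 1)) < 1" "hq ((q - \<i>) / (q - 1)) = Arg2pi q / pi - 1/4"
proof -
  have q1: "q - 1 \<noteq> 0" using assms by auto
  have "(norm (q - \<i>))^2 < (norm (q - 1))^2"
    unfolding cmod_power2 using assms by (simp add: power2_eq_square algebra_simps)
  then have "norm (q - \<i>) < norm (q - 1)" by (rule power_less_imp_less_base) simp
  then show "norm ((q - \<i>) / (q - 1)) < 1" using q1 by (simp add: norm_divide)
  have "\<i> - (q - \<i>) / (q - 1) = q * (\<i> - 1) / (q - 1)" "1 - (q - \<i>) / (q - 1) = (\<i> - 1) / (q - 1)"
    using q1 by (simp_all add: field_simps)
  then have "(\<i> - (q - \<i>) / (q - 1)) / (1 - (q - \<i>) / (q - 1)) = q"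
    using q1 by simp
  then show "hq ((q - \<i>) / (q - 1)) = Arg2pi q / pi - 1/4" by (simp add: hq_eq)
qed

definition qlog :: "complex \<Rightarrow> complex" where
  "qlog w = Ln ((w - \<i>) / (1 - w)) / (2 * pi * \<i>)"

lemma qlog_facts:
  assumes w: "norm w < 1"
  shows hq_eq_qlog: "complex_of_real (hq w) = qlog w + cnj (qlog w) + 3/4"
    and qlog_has_derivative: "(qlog has_field_derivative (1/(w - \<i>) - 1/(w - 1)) / (2*pi*\<i>)) (at w)"
proof -
  define q where "q = (\<i> - w) / (1 - w)"
  have w1: "w \<noteq> 1" "w \<noteq> \<i>" using w by auto
  have arg: "0 < Arg2pi q"
    using Arg2pi_halfplane_gt[OF halfplane_of_disc[OF w]] pi_gt_zero unfolding q_def by linarith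
  have mq: "(w - \<i>) / (1 - w) = - q" by (simp add: q_def minus_divide_left)
  show "complex_of_real (hq w) = qlog w + cnj (qlog w) + 3/4"
    using Arg2pi_Ln[OF arg]
    by (simp add: hq_eq qlog_def mq flip: q_def) (simp add: complex_eq_iff Re_divide Im_divide field_simps power2_eq_square)
  have "- q \<notin> \<real>\<^sub>\<le>\<^sub>0"
    using arg Arg2pi_eq_0[of q] by (auto simp: complex_nonpos_Reals_iff complex_is_Real_iff)
  then have "((\<lambda>w. Ln ((w - \<i>) / (1 - w))) has_field_derivative
      inverse (- q) * ((1 - \<i>) / (1 - w)^2)) (at w)"
    unfolding mq[symmetric] using w1
    by (auto intro!: derivative_eq_intros simp: field_simps power2_eq_square)
  moreover have "inverse (- q) * ((1 - \<i>) / (1 - w)^2) = 1/(w - \<i>) - 1/(w - 1)"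
  proof -
    have "w - \<i> \<noteq> 0" "1 - w \<noteq> 0" "w - 1 \<noteq> 0" using w1 by auto
    then have "inverse (- q) * ((1 - \<i>) / (1 - w)^2) = (1 - \<i>) / ((w - \<i>) * (1 - w))"
      "1/(w - \<i>) - 1/(w - 1) = (1 - \<i>) / ((w - \<i>) * (1 - w))"
      unfolding mq[symmetric] by (simp_all add: divide_simps power2_eq_square) (simp_all add: algebra_simps)
    then show ?thesis by simp
  qed
  ultimately show "(qlog has_field_derivative (1/(w - \<i>) - 1/(w - 1)) / (2*pi*\<i>)) (at w)"
    unfolding qlog_def[abs_def] by (auto intro: DERIV_cdivide)
qed

lemma qlog_rotated_has_derivative:
  assumes u: "norm u = 1" and z: "norm z < 1"
  shows "((\<lambda>z. qlog (u * z)) has_field_derivative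
           (1/(z - \<i> * cnj u) - 1/(z - cnj u)) / (2*pi*\<i>)) (at z)"
proof -
  have uz: "norm (u * z) < 1" using u z by (simp add: norm_mult)
  have uu: "u * cnj u = 1" using u by (simp add: complex_norm_square[symmetric])
  have "((\<lambda>z. qlog (u * z)) has_field_derivative
           (1/(u * z - \<i>) - 1/(u * z - 1)) / (2*pi*\<i>) * u) (at z)"
    by (rule DERIV_chain2[where g="\<lambda>z. u * z", OF qlog_has_derivative[OF uz]]) (auto intro!: derivative_eq_intros)
  moreover have "u / (u * z - c) = 1 / (z - c * cnj u)" for c
  proof -
    have "u * z - c = u * (z - c * cnj u)" using uu by (simp add: algebra_simps)
    then show ?thesis using uu by auto
  qed
  ultimately show ?thesis by (simp add: field_simps)
qed

section \<open>Holomorphic decomposition of the surface\<close>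

definition qE :: "complex \<Rightarrow> complex" where "qE z = qlog (rot8 * z)"
definition qN :: "complex \<Rightarrow> complex" where "qN z = qlog (- \<i> * rot8 * z)"
definition qW :: "complex \<Rightarrow> complex" where "qW z = qlog (- rot8 * z)"
definition qS :: "complex \<Rightarrow> complex" where "qS z = qlog (\<i> * rot8 * z)"

lemma h_eq_q:
  assumes "norm z < 1"
  shows "complex_of_real (hE z) = qE z + cnj (qE z) + 3/4"
    "complex_of_real (hN z) = qN z + cnj (qN z) + 3/4"
    "complex_of_real (hW z) = qW z + cnj (qW z) + 3/4"
    "complex_of_real (hS z) = qS z + cnj (qS z) + 3/4"
  using assms unfolding h_eq_hq qE_def qN_def qW_def qS_def
  by (auto intro!: hq_eq_qlog simp: norm_mult norm_rot8)

lemma q_has_derivative: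
  assumes "norm z < 1"
  shows "(qE has_field_derivative (1/(z - rot8) - 1/(z + \<i>*rot8)) / (2*pi*\<i>)) (at z)"
    "(qN has_field_derivative (1/(z - \<i>*rot8) - 1/(z - rot8)) / (2*pi*\<i>)) (at z)"
    "(qW has_field_derivative (1/(z + rot8) - 1/(z - \<i>*rot8)) / (2*pi*\<i>)) (at z)"
    "(qS has_field_derivative (1/(z + \<i>*rot8) - 1/(z + rot8)) / (2*pi*\<i>)) (at z)"
  using qlog_rotated_has_derivative[OF _ assms, of rot8] qlog_rotated_has_derivative[OF _ assms, of "- \<i> * rot8"]
    qlog_rotated_has_derivative[OF _ assms, of "- rot8"] qlog_rotated_has_derivative[OF _ assms, of "\<i> * rot8"]
  unfolding qE_def[abs_def] qN_def[abs_def] qW_def[abs_def] qS_def[abs_def]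
  by (simp_all add: norm_mult norm_rot8 cnj_rot8 mult.assoc)

lemma q_holomorphic:
  "qE holomorphic_on ball 0 1" "qN holomorphic_on ball 0 1"
  "qW holomorphic_on ball 0 1" "qS holomorphic_on ball 0 1"
proof -
  have hol: "f holomorphic_on ball 0 1"
    if "\<And>z. norm z < 1 \<Longrightarrow> (f has_field_derivative f' z) (at z)" for f f'
    unfolding holomorphic_on_open[OF open_ball] using that by (metis mem_ball_0)
  show "qE holomorphic_on ball 0 1" "qN holomorphic_on ball 0 1"
    "qW holomorphic_on ball 0 1" "qS holomorphic_on ball 0 1"
    by (rule hol, erule q_has_derivative)+
qed

definition zD_hol :: "complex \<Rightarrow> complex" where
  "zD_hol z = qE z + \<i> * qN z - qW z - \<i> * qS z"
definition zD_antihol :: "complex \<Rightarrow> complex" where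
  "zD_antihol z = qE z - \<i> * qN z - qW z + \<i> * qS z"
definition thetaD_hol :: "complex \<Rightarrow> complex" where
  "thetaD_hol z = sqrt 2 / 2 * (qE z - qN z + qW z - qS z)"

lemma holomorphic_parts:
  "zD_hol holomorphic_on ball 0 1" "zD_antihol holomorphic_on ball 0 1"
  "thetaD_hol holomorphic_on ball 0 1"
  unfolding zD_hol_def[abs_def] zD_antihol_def[abs_def] thetaD_hol_def[abs_def]
  using q_holomorphic by (auto intro!: holomorphic_intros)

lemma zD_thetaD_decomposition:
  assumes "norm z < 1"
  shows "zD z = zD_hol z + cnj (zD_antihol z)"
    "cnj (zD z) = zD_antihol z + cnj (zD_hol z)"
    "complex_of_real (thetaD z) = thetaD_hol z + cnj (thetaD_hol z)"
proof -
  show zD: "zD z = zD_hol z + cnj (zD_antihol z)"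
    unfolding zD_def zD_hol_def zD_antihol_def using h_eq_q[OF assms] by (simp add: algebra_simps)
  then show "cnj (zD z) = zD_antihol z + cnj (zD_hol z)" by simp
  show "complex_of_real (thetaD z) = thetaD_hol z + cnj (thetaD_hol z)"
    unfolding thetaD_def thetaD_hol_def of_real_mult of_real_add of_real_diff h_eq_q[OF assms]
    by (simp only: complex_cnj_mult complex_cnj_add complex_cnj_diff complex_cnj_complex_of_real) algebra
qed

theorem zD_thetaD_harmonic: "harmonic_on zD (ball 0 1)" "harmonic_on thetaD (ball 0 1)"
proof -
  have L: "bounded_linear (\<lambda>p. fst p + cnj (snd p))"
    by (intro bounded_linear_add bounded_linear_fst bounded_linear_compose[OF bounded_linear_cnj] bounded_linear_snd)
  show "harmonic_on zD (ball 0 1)"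
    by (rule harmonic_on_linear_holomorphic[OF open_ball holomorphic_parts(1,2) L])
       (simp add: zD_thetaD_decomposition)
  have "thetaD z = Re (thetaD_hol z + cnj (thetaD_hol z))" if "norm z < 1" for z
    using arg_cong[OF zD_thetaD_decomposition(3)[OF that], of Re] by simp
  then show "harmonic_on thetaD (ball 0 1)"
    by (intro harmonic_on_linear_holomorphic[OF open_ball holomorphic_parts(3,3)
          bounded_linear_compose[OF bounded_linear_Re L]]) simp
qed

lemma deriv_holomorphic_parts:
  fixes A B C D K :: complex
  assumes "norm z < 1"
  defines "A \<equiv> 1/(z - rot8)" and "B \<equiv> 1/(z + rot8)"
    and "C \<equiv> 1/(z - \<i>*rot8)" and "D \<equiv> 1/(z + \<i>*rot8)" and "K \<equiv> 2*pi*\<i>"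
  shows "deriv zD_hol z = ((A - D) + \<i> * (C - A) - (B - C) - \<i> * (D - B)) / K"
    "deriv zD_antihol z = ((A - D) - \<i> * (C - A) - (B - C) + \<i> * (D - B)) / K"
    "deriv thetaD_hol z = sqrt 2 / 2 * ((A - D) - (C - A) + (B - C) - (D - B)) / K"
proof -
  note q = q_has_derivative[OF assms(1), folded A_def B_def C_def D_def K_def]
  have "(zD_hol has_field_derivative (A - D)/K + \<i> * ((C - A)/K) - (B - C)/K - \<i> * ((D - B)/K)) (at z)"
    unfolding zD_hol_def[abs_def] by (intro DERIV_add DERIV_diff DERIV_cmult q)
  from DERIV_imp_deriv[OF this]
  show "deriv zD_hol z = ((A - D) + \<i> * (C - A) - (B - C) - \<i> * (D - B)) / K"
    by (simp add: add_divide_distrib diff_divide_distrib right_diff_distrib)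
  have "(zD_antihol has_field_derivative (A - D)/K - \<i> * ((C - A)/K) - (B - C)/K + \<i> * ((D - B)/K)) (at z)"
    unfolding zD_antihol_def[abs_def] by (intro DERIV_add DERIV_diff DERIV_cmult q)
  from DERIV_imp_deriv[OF this]
  show "deriv zD_antihol z = ((A - D) - \<i> * (C - A) - (B - C) + \<i> * (D - B)) / K"
    by (simp add: add_divide_distrib diff_divide_distrib right_diff_distrib)
  have "(thetaD_hol has_field_derivative sqrt 2 / 2 * ((A - D)/K - (C - A)/K + (B - C)/K - (D - B)/K)) (at z)"
    unfolding thetaD_hol_def[abs_def] by (intro DERIV_add DERIV_diff DERIV_cmult q)
  from DERIV_imp_deriv[OF this]
  show "deriv thetaD_hol z = sqrt 2 / 2 * ((A - D) - (C - A) + (B - C) - (D - B)) / K"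
    by (simp only: add_divide_distrib[symmetric] diff_divide_distrib[symmetric] times_divide_eq_right)
qed

lemma q_sum_has_derivative_zero:
  assumes "norm z < 1"
  shows "((\<lambda>z. qE z + qN z + qW z + qS z) has_field_derivative 0) (at z)"
proof -
  have "((\<lambda>z. qE z + qN z + qW z + qS z) has_field_derivative
      (1/(z - rot8) - 1/(z + \<i>*rot8)) / (2*pi*\<i>) + (1/(z - \<i>*rot8) - 1/(z - rot8)) / (2*pi*\<i>)
      + (1/(z + rot8) - 1/(z - \<i>*rot8)) / (2*pi*\<i>) + (1/(z + \<i>*rot8) - 1/(z + rot8)) / (2*pi*\<i>)) (at z)"
    by (intro DERIV_add q_has_derivative[OF assms])
  then show ?thesis by (simp only: add_divide_distrib[symmetric]) simp
qed

theorem wirtinger_identity: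
  assumes z: "norm z < 1"
  shows "wirt zD z * wirt (\<lambda>w. cnj (zD w)) z = (wirt (\<lambda>w. complex_of_real (thetaD w)) z)^2"
proof -
  have zb: "z \<in> ball 0 1" using z by simp
  have "wirt zD z = deriv zD_hol z"
    by (rule wirt_holomorphic_plus_cnj[OF open_ball zb holomorphic_parts(1,2)])
       (simp add: zD_thetaD_decomposition)
  moreover have "wirt (\<lambda>w. cnj (zD w)) z = deriv zD_antihol z"
    by (rule wirt_holomorphic_plus_cnj[OF open_ball zb holomorphic_parts(2,1)])
       (simp add: zD_thetaD_decomposition)
  moreover have "wirt (\<lambda>w. complex_of_real (thetaD w)) z = deriv thetaD_hol z"
    by (rule wirt_holomorphic_plus_cnj[OF open_ball zb holomorphic_parts(3,3)])
       (simp add: zD_thetaD_decomposition)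
  moreover have "deriv zD_hol z * deriv zD_antihol z = (deriv thetaD_hol z)^2"
  proof -
    have "(norm (z^2))^2 < 1" using z by (simp add: norm_power power_less_one_iff)
    then have "z^2 \<noteq> \<i>" "z^2 \<noteq> - \<i>" by auto
    note poles = pole_square_identity[OF rot8_squared this]
    have c: "(complex_of_real (sqrt 2 / 2))^2 = 1/2" by (simp add: power_divide flip: of_real_power)
    let ?A = "1/(z - rot8)" and ?B = "1/(z + rot8)" and ?C = "1/(z - \<i>*rot8)" and ?D = "1/(z + \<i>*rot8)"
    have "((?A - ?D) + \<i> * (?C - ?A) - (?B - ?C) - \<i> * (?D - ?B))
        * ((?A - ?D) - \<i> * (?C - ?A) - (?B - ?C) + \<i> * (?D - ?B))
        = (sqrt 2 / 2 * ((?A - ?D) - (?C - ?A) + (?B - ?C) - (?D - ?B)))^2"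
      using poles c power2_i by algebra
    moreover have "x * y = c^2 \<Longrightarrow> (x / k) * (y / k) = (c / k)^2" for x y c k :: complex
      by (simp add: power_divide power2_eq_square)
    ultimately show ?thesis unfolding deriv_holomorphic_parts[OF z] by blast
  qed
  ultimately show ?thesis by simp
qed

lemma h_sum_eq_one:
  assumes "norm z < 1" shows "hE z + hN z + hW z + hS z = 1"
proof -
  have "\<exists>c. \<forall>w\<in>ball 0 1. qE w + qN w + qW w + qS w = c"
    by (rule has_field_derivative_zero_constant[OF convex_ball])
       (use q_sum_has_derivative_zero in \<open>auto intro: has_field_derivative_at_within\<close>)
  then obtain c where c: "\<And>w. norm w < 1 \<Longrightarrow> qE w + qN w + qW w + qS w = c" by auto
  have sum: "complex_of_real (hE w + hN w + hW w + hS w) = c + cnj c + 3" if "norm w < 1" for w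
    using h_eq_q[OF that] c[of w] that by (simp add: algebra_simps flip: complex_cnj_add)
  have Arg_i: "Arg2pi \<i> = pi/2"
    using Arg2pi_unique[of 1 "pi/2" \<i>] by (simp add: exp_eq_polar)
  have "hq 0 = 1/4" by (simp add: hq_eq Arg_i)
  then have "hE 0 + hN 0 + hW 0 + hS 0 = 1" by (simp add: h_eq_hq)
  moreover have "complex_of_real (hE z + hN z + hW z + hS z) = complex_of_real (hE 0 + hN 0 + hW 0 + hS 0)"
    using sum[of 0] sum[OF assms] by simp
  ultimately show ?thesis by (simp only: of_real_eq_iff)
qed

section \<open>Boundary behaviour\<close>

lemma hq_boundary_zero:
  assumes w1: "norm w = 1" and lt: "Re w + Im w < 1"
  shows "isCont hq w" "hq w = 0"
proof -
  obtain x y where w: "w = Complex x y" by (cases w)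
  have xy: "x^2 + y^2 = 1" using w1 by (simp add: w cmod_def)
  then have "x \<le> 1" by (smt (verit) zero_le_power2 power2_le_imp_le one_power2)
  moreover have "x \<noteq> 1" using xy lt w by auto
  ultimately have x1: "x < 1" by simp
  define \<rho> where "\<rho> = (1 - x - y) / (2 - 2*x)"
  have \<rho>: "\<rho> > 0" using lt x1 by (simp add: \<rho>_def w)
  have w_ne: "w \<noteq> 1" using x1 by (auto simp: w complex_eq_iff)
  have q: "(\<i> - w) / (1 - w) = of_real \<rho> * (1 + \<i>)"
  proof -
    have "(1 - x - y) * (1 - x + y) = - x * (2 - 2*x)" "(1 - x - y) * (1 - x - y) = (1 - y) * (2 - 2*x)"
      using xy by (simp_all add: algebra_simps power2_eq_square)
    then have "\<i> - w = of_real \<rho> * (1 + \<i>) * (1 - w)"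
      using x1 by (simp add: w \<rho>_def complex_eq_iff field_simps)
    then show ?thesis using w_ne by (simp add: field_simps)
  qed
  have "of_real (\<rho> * sqrt 2) * exp (\<i> * of_real (pi/4)) = (\<i> - w) / (1 - w)"
    unfolding rot8_def[symmetric] q by (simp add: rot8_eq complex_eq_iff)
  then have "Arg2pi ((\<i> - w) / (1 - w)) = pi/4"
    by (rule Arg2pi_unique) (use \<rho> in auto)
  then show "hq w = 0" by (simp add: hq_eq)
  have "(\<i> - w) / (1 - w) \<notin> \<real>\<^sub>\<ge>\<^sub>0" using \<rho> by (simp add: q complex_nonneg_Reals_iff)
  then have "isCont Arg2pi ((\<i> - w) / (1 - w))" by (rule continuous_at_Arg2pi)
  moreover have "isCont (\<lambda>w. (\<i> - w) / (1 - w)) w" using w_ne by (intro continuous_intros) auto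
  ultimately have "isCont (\<lambda>w. Arg2pi ((\<i> - w) / (1 - w))) w"
    using continuous_at_compose by (auto simp: o_def)
  then show "isCont hq w" unfolding hq_eq[abs_def] by (intro continuous_intros) auto
qed

lemma h_tendsto_zero:
  assumes f: "(f \<longlongrightarrow> w) F" and w1: "norm w = 1"
  shows "Re w < sqrt 2 / 2 \<Longrightarrow> ((\<lambda>x. hE (f x)) \<longlongrightarrow> 0) F"
    and "Im w < sqrt 2 / 2 \<Longrightarrow> ((\<lambda>x. hN (f x)) \<longlongrightarrow> 0) F"
    and "- Re w < sqrt 2 / 2 \<Longrightarrow> ((\<lambda>x. hW (f x)) \<longlongrightarrow> 0) F"
    and "- Im w < sqrt 2 / 2 \<Longrightarrow> ((\<lambda>x. hS (f x)) \<longlongrightarrow> 0) F"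
proof -
  have E: "((\<lambda>x. hE (u * f x)) \<longlongrightarrow> 0) F" if "norm u = 1" "Re (u * w) < sqrt 2 / 2" for u
  proof -
    have n: "norm (rot8 * (u * w)) = 1" using that w1 by (simp add: norm_mult norm_rot8)
    have "Re (rot8 * (u * w)) + Im (rot8 * (u * w)) = sqrt 2 * Re (u * w)"
      by (simp add: rot8_eq algebra_simps)
    also have "\<dots> < sqrt 2 * (sqrt 2 / 2)" using that(2) by (intro mult_strict_left_mono) auto
    also have "\<dots> = 1" by simp
    finally have lt: "Re (rot8 * (u * w)) + Im (rot8 * (u * w)) < 1" by simp
    have "((\<lambda>x. rot8 * (u * f x)) \<longlongrightarrow> rot8 * (u * w)) F" by (intro tendsto_intros f)
    from isCont_tendsto_compose[OF hq_boundary_zero(1)[OF n lt] this]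
    show ?thesis using hq_boundary_zero(2)[OF n lt] by (simp add: h_eq_hq mult.assoc)
  qed
  show "Re w < sqrt 2 / 2 \<Longrightarrow> ((\<lambda>x. hE (f x)) \<longlongrightarrow> 0) F" using E[of 1] by simp
  show "Im w < sqrt 2 / 2 \<Longrightarrow> ((\<lambda>x. hN (f x)) \<longlongrightarrow> 0) F"
    using E[of "- \<i>"] by (simp add: h_quarter_turn)
  show "- Re w < sqrt 2 / 2 \<Longrightarrow> ((\<lambda>x. hW (f x)) \<longlongrightarrow> 0) F"
    using E[of "- 1"] by (simp add: h_quarter_turn)
  show "- Im w < sqrt 2 / 2 \<Longrightarrow> ((\<lambda>x. hS (f x)) \<longlongrightarrow> 0) F"
    using E[of \<i>] by (simp add: h_quarter_turn)
qed

lemma h_nonneg: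
  assumes "norm z < 1" shows "0 \<le> hE z" "0 \<le> hN z" "0 \<le> hW z" "0 \<le> hS z"
  using assms by (auto simp: h_eq_hq norm_mult norm_rot8 intro!: less_imp_le[OF hq_pos])

definition surface :: "complex \<Rightarrow> complex \<times> real" where
  "surface = (\<lambda>\<zeta>. (zD \<zeta>, thetaD \<zeta>))"

lemma surface_convex: "surface \<zeta> = hE \<zeta> *\<^sub>R vE + hN \<zeta> *\<^sub>R vN + hW \<zeta> *\<^sub>R vW + hS \<zeta> *\<^sub>R vS"
proof (rule prod_eqI)
  show "fst (surface \<zeta>) = fst (hE \<zeta> *\<^sub>R vE + hN \<zeta> *\<^sub>R vN + hW \<zeta> *\<^sub>R vW + hS \<zeta> *\<^sub>R vS)"
    by (simp add: surface_def zD_def vE_def vN_def vW_def vS_def scaleR_conv_of_real algebra_simps)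
  show "snd (surface \<zeta>) = snd (hE \<zeta> *\<^sub>R vE + hN \<zeta> *\<^sub>R vN + hW \<zeta> *\<^sub>R vW + hS \<zeta> *\<^sub>R vS)"
    by (simp add: surface_def thetaD_def vE_def vN_def vW_def vS_def field_simps)
qed

definition quarter_turn :: "complex \<times> real \<Rightarrow> complex \<times> real" where
  "quarter_turn p = (- \<i> * fst p, - snd p)"

lemma quarter_turn_vertices:
  "quarter_turn vE = vS" "quarter_turn vS = vW" "quarter_turn vW = vN" "quarter_turn vN = vE"
  by (simp_all add: quarter_turn_def vE_def vN_def vW_def vS_def)

lemma linear_quarter_turn: "linear quarter_turn"
  by (rule linearI) (simp_all add: quarter_turn_def algebra_simps scaleR_conv_of_real)

lemma surface_quarter_turn: "surface (- \<i> * \<zeta>) = quarter_turn (surface \<zeta>)"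
  by (simp add: surface_convex h_quarter_turn linear_add[OF linear_quarter_turn]
      linear_scale[OF linear_quarter_turn] quarter_turn_vertices)

lemma arc_E_point:
  assumes "w \<in> arc (-pi/4) (pi/4)"
  shows "norm w = 1" "sqrt 2 / 2 < Re w" "\<bar>Im w\<bar> < sqrt 2 / 2"
proof -
  obtain t where t: "-pi/4 < t" "t < pi/4" and w: "w = exp (\<i> * of_real t)"
    using assms by (auto simp: arc_def)
  show w1: "norm w = 1" by (simp add: w)
  have "cos (pi/4) < cos \<bar>t\<bar>" using t by (subst cos_mono_less_eq) auto
  then show re: "sqrt 2 / 2 < Re w" by (simp add: w Re_exp cos_45)
  have "(Re w)^2 + (Im w)^2 = 1" using w1 by (simp add: cmod_power2[symmetric])
  moreover have "(sqrt 2 / 2)^2 < (Re w)^2"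
    using re by (intro power_strict_mono) (auto simp del: real_sqrt_gt_0_iff)
  ultimately have "\<bar>Im w\<bar>^2 < (sqrt 2 / 2)^2" by (simp add: power_divide)
  then show "\<bar>Im w\<bar> < sqrt 2 / 2" by (rule power_less_imp_less_base) simp
qed

lemma i_times_arc: "w \<in> arc a b \<Longrightarrow> \<i> * w \<in> arc (a + pi/2) (b + pi/2)"
proof (clarsimp simp: arc_def)
  fix t assume "a < t" "t < b"
  moreover have "\<i> * exp (\<i> * of_real t) = exp (\<i> * of_real (t + pi/2))"
    by (simp add: exp_eq_polar complex_eq_iff cos_add sin_add)
  ultimately show "\<exists>s. \<i> * exp (\<i> * of_real t) = exp (\<i> * of_real s) \<and> a + pi/2 < s \<and> s < b + pi/2"
    by (intro exI[of _ "t + pi/2"]) auto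
qed

lemma arc_minus_two_pi: "w \<in> arc a b \<Longrightarrow> w \<in> arc (a - 2*pi) (b - 2*pi)"
proof (clarsimp simp: arc_def)
  fix t assume "a < t" "t < b"
  moreover have "exp (\<i> * of_real t) = exp (\<i> * of_real (t - 2*pi))"
    by (simp add: exp_eq_polar complex_eq_iff cos_diff sin_diff)
  ultimately show "\<exists>s. exp (\<i> * of_real t) = exp (\<i> * of_real s) \<and> a - 2*pi < s \<and> s < b - 2*pi"
    by (intro exI[of _ "t - 2*pi"]) auto
qed

lemma eventually_h_sum: "\<forall>\<^sub>F \<zeta> in at w within ball 0 1. hE \<zeta> + hN \<zeta> + hW \<zeta> + hS \<zeta> = 1"
  by (auto simp: eventually_at_filter h_sum_eq_one)

lemma surface_tendsto_E:
  assumes w: "w \<in> arc (-pi/4) (pi/4)"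
  shows "(surface \<longlongrightarrow> vE) (at w within ball 0 1)"
proof -
  note L = h_tendsto_zero[OF tendsto_ident_at arc_E_point(1)[OF w]]
  have "Im w < sqrt 2 / 2" "- Re w < sqrt 2 / 2" "- Im w < sqrt 2 / 2"
    using arc_E_point[OF w] by (auto simp: abs_less_iff)
  with L have "((\<lambda>\<zeta>. hN \<zeta> *\<^sub>R vN + hE \<zeta> *\<^sub>R vE + hW \<zeta> *\<^sub>R vW + hS \<zeta> *\<^sub>R vS)
      \<longlongrightarrow> 0 *\<^sub>R vN + (1 - 0) *\<^sub>R vE) (at w within ball 0 1)"
    by (intro tendsto_convex_weights) (use eventually_h_sum in \<open>simp_all add: add_ac\<close>)
  then show ?thesis by (simp add: surface_convex[abs_def] add_ac)
qed

lemma tendsto_surface_quarter_turn: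
  assumes "(surface \<longlongrightarrow> v) (at (\<i> * w) within ball 0 1)"
  shows "(surface \<longlongrightarrow> quarter_turn v) (at w within ball 0 1)"
proof -
  have "filterlim (\<lambda>\<zeta>. \<i> * \<zeta>) (at (\<i> * w) within ball 0 1) (at w within ball 0 1)"
    unfolding filterlim_at
    by (auto simp: eventually_at_filter norm_mult intro!: tendsto_intros)
  from filterlim_compose[OF assms this]
  have "((\<lambda>\<zeta>. quarter_turn (surface (\<i> * \<zeta>))) \<longlongrightarrow> quarter_turn v) (at w within ball 0 1)"
    unfolding quarter_turn_def by (intro tendsto_intros)
  moreover have "quarter_turn (surface (\<i> * \<zeta>)) = surface \<zeta>" for \<zeta>
    using surface_quarter_turn[of "\<i> * \<zeta>"] by simp
  ultimately show ?thesis by simp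
qed

theorem surface_tendsto_arcs:
  "w \<in> arc (-pi/4) (pi/4) \<Longrightarrow> (surface \<longlongrightarrow> vE) (at w within ball 0 1)"
  "w \<in> arc (5*pi/4) (7*pi/4) \<Longrightarrow> (surface \<longlongrightarrow> vS) (at w within ball 0 1)"
  "w \<in> arc (3*pi/4) (5*pi/4) \<Longrightarrow> (surface \<longlongrightarrow> vW) (at w within ball 0 1)"
  "w \<in> arc (pi/4) (3*pi/4) \<Longrightarrow> (surface \<longlongrightarrow> vN) (at w within ball 0 1)"
proof -
  have arcs: "arc (5*pi/4 + pi/2 - 2*pi) (7*pi/4 + pi/2 - 2*pi) = arc (-pi/4) (pi/4)"
    "arc (3*pi/4 + pi/2) (5*pi/4 + pi/2) = arc (5*pi/4) (7*pi/4)"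
    "arc (pi/4 + pi/2) (3*pi/4 + pi/2) = arc (3*pi/4) (5*pi/4)"
    by (rule arg_cong2[where f = arc]; simp add: field_simps)+
  show E: "w \<in> arc (-pi/4) (pi/4) \<Longrightarrow> (surface \<longlongrightarrow> vE) (at w within ball 0 1)" for w
    by (rule surface_tendsto_E)
  have S: "(surface \<longlongrightarrow> vS) (at w within ball 0 1)" if "w \<in> arc (5*pi/4) (7*pi/4)" for w
  proof -
    have "\<i> * w \<in> arc (-pi/4) (pi/4)"
      using arc_minus_two_pi[OF i_times_arc[OF that]] by (simp only: arcs)
    from tendsto_surface_quarter_turn[OF E[OF this]] show ?thesis by (simp add: quarter_turn_vertices)
  qed
  then show "w \<in> arc (5*pi/4) (7*pi/4) \<Longrightarrow> (surface \<longlongrightarrow> vS) (at w within ball 0 1)" .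
  have W: "(surface \<longlongrightarrow> vW) (at w within ball 0 1)" if "w \<in> arc (3*pi/4) (5*pi/4)" for w
    using tendsto_surface_quarter_turn[OF S] i_times_arc[OF that]
    by (simp add: arcs quarter_turn_vertices)
  then show "w \<in> arc (3*pi/4) (5*pi/4) \<Longrightarrow> (surface \<longlongrightarrow> vW) (at w within ball 0 1)" .
  have N: "(surface \<longlongrightarrow> vN) (at w within ball 0 1)" if "w \<in> arc (pi/4) (3*pi/4)" for w
    using tendsto_surface_quarter_turn[OF W] i_times_arc[OF that]
    by (simp add: arcs quarter_turn_vertices)
  then show "w \<in> arc (pi/4) (3*pi/4) \<Longrightarrow> (surface \<longlongrightarrow> vN) (at w within ball 0 1)" .
qed

lemma boundary_limit_in_cluster_set:
  assumes w1: "norm w = 1" and lim: "(surface \<longlongrightarrow> v) (at w within ball 0 1)"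
  shows "v \<in> boundary_cluster_set surface"
proof -
  define t where "t n = 1 - 1 / real (Suc (Suc n))" for n
  have t01: "0 < t n" "t n < 1" for n by (auto simp: t_def field_simps)
  have "(\<lambda>n. 1 / real (Suc (Suc n))) \<longlonglongrightarrow> 0"
    using LIMSEQ_Suc[OF LIMSEQ_Suc[OF lim_inverse_n']] by simp
  from tendsto_diff[OF tendsto_const[of 1] this] have t1: "t \<longlonglongrightarrow> 1" by (simp add: t_def[abs_def])
  have norm_tw: "norm (of_real (t n) * w) = t n" for n using w1 t01[of n] by (simp add: norm_mult)
  have "filterlim (\<lambda>n. of_real (t n) * w) (at w within ball 0 1) sequentially"
    unfolding filterlim_at
  proof
    show "\<forall>\<^sub>F n in sequentially. of_real (t n) * w \<in> ball 0 1 \<and> of_real (t n) * w \<noteq> w"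
      using norm_tw t01 w1 by (intro always_eventually allI conjI) (auto, metis less_irrefl)
    show "(\<lambda>n. of_real (t n) * w) \<longlonglongrightarrow> w"
      using tendsto_mult[OF tendsto_of_real[OF t1] tendsto_const[of w]] by simp
  qed
  with lim have "(\<lambda>n. surface (of_real (t n) * w)) \<longlonglongrightarrow> v" by (rule filterlim_compose)
  then show ?thesis
    unfolding boundary_cluster_set_def using norm_tw t01 t1 by (auto intro!: exI[of _ "\<lambda>n. of_real (t n) * w"])
qed

lemma cluster_set_quarter_turn:
  assumes "p \<in> boundary_cluster_set surface"
  shows "quarter_turn p \<in> boundary_cluster_set surface"
proof -
  obtain s where s: "\<And>n. s n \<in> ball 0 1" "(\<lambda>n. norm (s n)) \<longlonglongrightarrow> 1" "(\<lambda>n. surface (s n)) \<longlonglongrightarrow> p"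
    using assms unfolding boundary_cluster_set_def by blast
  have "(\<lambda>n. surface (- \<i> * s n)) \<longlonglongrightarrow> quarter_turn p"
    unfolding surface_quarter_turn quarter_turn_def by (intro tendsto_intros s)
  with s show ?thesis
    unfolding boundary_cluster_set_def by (intro CollectI exI[of _ "\<lambda>n. - \<i> * s n"]) (simp add: norm_mult)
qed

lemma cluster_set_boundary_sequence:
  assumes "p \<in> boundary_cluster_set surface"
  obtains x l where "\<And>n. norm (x n) < 1" "x \<longlonglongrightarrow> l" "norm l = 1" "(\<lambda>n. surface (x n)) \<longlonglongrightarrow> p"
proof -
  obtain s where s: "\<And>n. norm (s n) < 1" "(\<lambda>n. norm (s n)) \<longlonglongrightarrow> 1" "(\<lambda>n. surface (s n)) \<longlonglongrightarrow> p"
    using assms unfolding boundary_cluster_set_def by auto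
  obtain l r where r: "strict_mono r" and l: "(s \<circ> r) \<longlonglongrightarrow> l"
    using compact_imp_seq_compact[OF compact_cball, of 0 1] s(1)
    by (metis less_imp_le mem_cball_0 seq_compactE)
  have "(\<lambda>n. norm ((s \<circ> r) n)) \<longlonglongrightarrow> norm l" by (intro tendsto_intros l)
  moreover have "(\<lambda>n. norm ((s \<circ> r) n)) \<longlonglongrightarrow> 1" using LIMSEQ_subseq_LIMSEQ[OF s(2) r] by (simp add: o_def)
  ultimately have "norm l = 1" using LIMSEQ_unique by blast
  moreover have "(\<lambda>n. surface ((s \<circ> r) n)) \<longlonglongrightarrow> p"
    using LIMSEQ_subseq_LIMSEQ[OF s(3) r] by (simp add: o_def)
  ultimately show ?thesis using that[of "s \<circ> r" l] s(1) l by simp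
qed

lemma cluster_set_subset: "boundary_cluster_set surface \<subseteq> C_diamond"
proof
  fix p assume "p \<in> boundary_cluster_set surface"
  then obtain x l where x: "\<And>n. norm (x n) < 1" and l: "x \<longlonglongrightarrow> l" "norm l = 1"
    and p: "(\<lambda>n. surface (x n)) \<longlonglongrightarrow> p"
    by (rule cluster_set_boundary_sequence) blast
  note zero = h_tendsto_zero[OF l] and weights = h_nonneg[OF x] h_sum_eq_one[OF x]
  note segment = limit_in_closed_segment[OF trivial_limit_sequentially]
  have pos: "0 < sqrt 2 / 2" by simp
  consider "0 \<le> Re l" "0 \<le> Im l" | "Re l \<le> 0" "0 \<le> Im l" | "Re l \<le> 0" "Im l \<le> 0" | "0 \<le> Re l" "Im l \<le> 0"
    by linarith
  then show "p \<in> C_diamond"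
  proof cases
    case 1
    have "p \<in> closed_segment vE vN"
      by (rule segment[where a="\<lambda>n. hE (x n)" and b="\<lambda>n. hN (x n)" and c="\<lambda>n. hW (x n)" and d="\<lambda>n. hS (x n)"])
         (use weights zero p 1 pos in \<open>simp_all add: surface_convex\<close>)
    then show ?thesis by (simp add: C_diamond_def)
  next
    case 2
    have "p \<in> closed_segment vN vW"
      by (rule segment[where a="\<lambda>n. hN (x n)" and b="\<lambda>n. hW (x n)" and c="\<lambda>n. hE (x n)" and d="\<lambda>n. hS (x n)"])
         (use weights zero p 2 pos in \<open>simp_all add: surface_convex add_ac\<close>)
    then show ?thesis by (simp add: C_diamond_def)
  next
    case 3
    have "p \<in> closed_segment vW vS"
      by (rule segment[where a="\<lambda>n. hW (x n)" and b="\<lambda>n. hS (x n)" and c="\<lambda>n. hE (x n)" and d="\<lambda>n. hN (x n)"])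
         (use weights zero p 3 pos in \<open>simp_all add: surface_convex add_ac\<close>)
    then show ?thesis by (simp add: C_diamond_def)
  next
    case 4
    have "p \<in> closed_segment vS vE"
      by (rule segment[where a="\<lambda>n. hS (x n)" and b="\<lambda>n. hE (x n)" and c="\<lambda>n. hN (x n)" and d="\<lambda>n. hW (x n)"])
         (use weights zero p 4 pos in \<open>simp_all add: surface_convex add_ac\<close>)
    then show ?thesis by (simp add: C_diamond_def)
  qed
qed

text \<open>The sequence runs to \<open>e\<^sup>i\<^sup>\<pi>\<^sup>/\<^sup>4\<close> inside the level set \<open>hE = l\<close>: it is the rotation by
  \<open>e\<^sup>-\<^sup>i\<^sup>\<pi>\<^sup>/\<^sup>4\<close> of the Moebius image of a ray of angle \<open>\<phi>\<close>, along which \<open>hq\<close> is constant.\<close>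

lemma cluster_set_edge_EN_interior:
  assumes l: "0 < l" "l < 1"
  shows "l *\<^sub>R vE + (1 - l) *\<^sub>R vN \<in> boundary_cluster_set surface"
proof -
  define \<phi> where "\<phi> = pi * (l + 1/4)"
  have \<phi>: "pi/4 < \<phi>" "\<phi> < 5*pi/4" using l by (auto simp: \<phi>_def algebra_simps)
  have "0 < sin (\<phi> - pi/4)" using \<phi> by (intro sin_gt_zero) auto
  then have cos_sin: "cos \<phi> < sin \<phi>" by (simp add: sin_diff cos_45 sin_45 algebra_simps)
  define q where "q n = of_real (1 / real (Suc n)) * exp (\<i> * of_real \<phi>)" for n
  have q_half: "Re (q n) < Im (q n)" for n
    using cos_sin by (simp add: q_def Re_exp Im_exp divide_strict_right_mono)
  have Arg_q: "Arg2pi (q n) = \<phi>" for n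
  proof -
    have "Arg2pi (q n) = Arg2pi (exp (\<i> * of_real \<phi>))"
      unfolding q_def by (rule Arg2pi_times_of_real) simp
    also have "\<dots> = \<phi>" using \<phi> pi_gt_zero by (subst Arg2pi_exp) auto
    finally show ?thesis .
  qed
  have hq_q: "hq ((q n - \<i>) / (q n - 1)) = l" for n
    by (simp add: hq_mobius(2)[OF q_half] Arg_q \<phi>_def field_simps)
  define \<zeta> where "\<zeta> n = - \<i> * rot8 * ((q n - \<i>) / (q n - 1))" for n
  have norm_\<zeta>: "norm (\<zeta> n) < 1" for n
    unfolding \<zeta>_def norm_mult using hq_mobius(1)[OF q_half] by (simp add: norm_rot8)
  have hE_\<zeta>: "hE (\<zeta> n) = l" for n
  proof -
    have "rot8 * (- \<i> * rot8 * x) = - \<i> * rot8^2 * x" for x by (simp add: power2_eq_square)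
    then have "rot8 * (- \<i> * rot8 * x) = x" for x by (simp add: rot8_squared)
    then show ?thesis using hq_q[of n] by (simp only: \<zeta>_def h_eq_hq)
  qed
  have "q \<longlonglongrightarrow> of_real 0 * exp (\<i> * of_real \<phi>)"
    unfolding q_def using LIMSEQ_Suc[OF lim_inverse_n'] by (intro tendsto_intros) simp
  then have "\<zeta> \<longlonglongrightarrow> - \<i> * rot8 * ((0 - \<i>) / (0 - 1))"
    unfolding \<zeta>_def by (intro tendsto_intros) auto
  then have \<zeta>_lim: "\<zeta> \<longlonglongrightarrow> rot8" by (simp add: algebra_simps)
  note zero = h_tendsto_zero[OF \<zeta>_lim norm_rot8]
  have "(\<lambda>n. hE (\<zeta> n) *\<^sub>R vE + hN (\<zeta> n) *\<^sub>R vN + hW (\<zeta> n) *\<^sub>R vW + hS (\<zeta> n) *\<^sub>R vS)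
      \<longlonglongrightarrow> l *\<^sub>R vE + (1 - l) *\<^sub>R vN"
    by (intro tendsto_convex_weights always_eventually allI h_sum_eq_one norm_\<zeta> zero)
       (simp_all add: hE_\<zeta> rot8_eq)
  moreover have "(\<lambda>n. norm (\<zeta> n)) \<longlonglongrightarrow> 1"
    using tendsto_norm[OF \<zeta>_lim] by (simp add: norm_rot8)
  ultimately show ?thesis
    unfolding boundary_cluster_set_def using norm_\<zeta>
    by (intro CollectI exI[of _ \<zeta>]) (simp add: surface_convex)
qed

lemma cluster_set_edge_EN: "closed_segment vE vN \<subseteq> boundary_cluster_set surface"
proof
  fix p assume "p \<in> closed_segment vE vN"
  then obtain u where u: "0 \<le> u" "u \<le> 1" and p: "p = (1 - u) *\<^sub>R vE + u *\<^sub>R vN"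
    by (auto simp: in_segment)
  have "1 \<in> arc (-pi/4) (pi/4)"
    unfolding arc_def by (intro CollectI exI[of _ 0]) simp
  from boundary_limit_in_cluster_set[OF _ surface_tendsto_arcs(1)[OF this]]
  have E: "vE \<in> boundary_cluster_set surface" by simp
  have "\<i> \<in> arc (pi/4) (3*pi/4)"
    unfolding arc_def by (intro CollectI exI[of _ "pi/2"]) (simp add: exp_eq_polar complex_eq_iff)
  from boundary_limit_in_cluster_set[OF _ surface_tendsto_arcs(4)[OF this]]
  have N: "vN \<in> boundary_cluster_set surface" by simp
  consider "u = 0" | "u = 1" | "0 < u" "u < 1" using u by linarith
  then show "p \<in> boundary_cluster_set surface"
  proof cases
    case 3
    then show ?thesis using cluster_set_edge_EN_interior[of "1 - u"] by (simp add: p)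
  qed (use E N in \<open>simp_all add: p\<close>)
qed

theorem cluster_set_eq: "boundary_cluster_set surface = C_diamond"
proof
  show "boundary_cluster_set surface \<subseteq> C_diamond" by (rule cluster_set_subset)
  have turn: "closed_segment (quarter_turn a) (quarter_turn b) \<subseteq> boundary_cluster_set surface"
    if "closed_segment a b \<subseteq> boundary_cluster_set surface" for a b
    using that cluster_set_quarter_turn by (auto simp: closed_segment_linear_image[OF linear_quarter_turn])
  have SE: "closed_segment vS vE \<subseteq> boundary_cluster_set surface"
    using turn[OF cluster_set_edge_EN] by (simp add: quarter_turn_vertices)
  have WS: "closed_segment vW vS \<subseteq> boundary_cluster_set surface"
    using turn[OF SE] by (simp add: quarter_turn_vertices)
  have NW: "closed_segment vN vW \<subseteq> boundary_cluster_set surface"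
    using turn[OF WS] by (simp add: quarter_turn_vertices)
  from SE WS NW show "C_diamond \<subseteq> boundary_cluster_set surface"
    using cluster_set_edge_EN by (simp add: C_diamond_def)
qed

theorem mainTheorem8:
  shows "harmonic_on zD (ball 0 1) \<and> harmonic_on thetaD (ball 0 1)
    \<and> (\<forall>\<zeta>\<in>ball 0 1. wirt zD \<zeta> * wirt (\<lambda>w. cnj (zD w)) \<zeta>
                        = (wirt (\<lambda>w. complex_of_real (thetaD w)) \<zeta>)^2)
    \<and> (\<forall>w\<in>arc (-pi/4) (pi/4). ((\<lambda>\<zeta>. (zD \<zeta>, thetaD \<zeta>)) \<longlongrightarrow> vE) (at w within ball 0 1))
    \<and> (\<forall>w\<in>arc (pi/4) (3*pi/4). ((\<lambda>\<zeta>. (zD \<zeta>, thetaD \<zeta>)) \<longlongrightarrow> vN) (at w within ball 0 1))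
    \<and> (\<forall>w\<in>arc (3*pi/4) (5*pi/4). ((\<lambda>\<zeta>. (zD \<zeta>, thetaD \<zeta>)) \<longlongrightarrow> vW) (at w within ball 0 1))
    \<and> (\<forall>w\<in>arc (5*pi/4) (7*pi/4). ((\<lambda>\<zeta>. (zD \<zeta>, thetaD \<zeta>)) \<longlongrightarrow> vS) (at w within ball 0 1))
    \<and> boundary_cluster_set (\<lambda>\<zeta>. (zD \<zeta>, thetaD \<zeta>)) = C_diamond"
  unfolding surface_def[symmetric]
  using zD_thetaD_harmonic wirtinger_identity surface_tendsto_arcs cluster_set_eq by simp

end
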